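(* For any $\alpha>-1$, $\nu>0$ and $x>0$, $$\frac{L_{\nu+1}^{\alpha-1}(-x)}{L_{\nu}^{\alpha}(-x)}>\frac{\alpha+x-1+\sqrt{(\alpha+x+1)^2+4\nu x}}{2(\nu+1)} .$$
   Context: $L_\nu^\alpha$ denotes the Laguerre function $L_\nu^\alpha(x)=\dfrac{\Gamma(\nu+\alpha+1)}{\Gamma(\nu+1)\Gamma(\alpha+1)}\,{}_1F_1(-\nu;\alpha+1;x)$, which reduces to the generalized Laguerre polynomial when $\nu$ is a nonnegative integer. *)

theory Defs
  imports "HOL-Analysis.Analysis"
begin

text \<open>Laguerre function
  L_nu^alpha(x) = Gamma(nu+alpha+1) / (Gamma(nu+1) Gamma(alpha+1)) * 1F1(-nu; alpha+1; x),
  written with the regularized Kummer series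
  1F1(a;b;x)/Gamma(b) = sum_k (a)_k x^k / (k! Gamma(b+k)),
  where 1/Gamma is the entire function rGamma. For alpha+1 not a nonpositive
  integer this is literally the defining formula; otherwise it is its
  (standard) continuous extension in alpha.\<close>

definition laguerre_fun :: "real \<Rightarrow> real \<Rightarrow> real \<Rightarrow> real" where
  "laguerre_fun \<nu> \<alpha> x =
     Gamma (\<nu> + \<alpha> + 1) / Gamma (\<nu> + 1) *
     (\<Sum>k. pochhammer (-\<nu>) k * x ^ k / fact k * rGamma (\<alpha> + 1 + real k))"

end

theory Submission
  imports Defs
begin

text \<open>
  With \<open>c = \<alpha> + 1\<close> let \<open>p(x) = 1F1(-\<nu>; c; -x) / \<Gamma>(c)\<close> and \<open>q = p'\<close>. Up to a common Gamma
  factor, \<open>L_\<nu>^\<alpha>(-x)\<close> is \<open>p(x)\<close> and, by a contiguous relation, \<open>L_(\<nu>+1)^(\<alpha>-1)(-x)\<close> is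
  \<open>((\<alpha> + x) p + x q) / (\<nu> + 1)\<close>; isolating the square root, the bound becomes
  \<open>H = x q\<^sup>2 + (c + x) p q - \<nu> p\<^sup>2 > 0\<close>. Kummer's equation \<open>x q' + (c + x) q = \<nu> p\<close> first
  gives \<open>p, q > 0\<close> on \<open>(0, \<infinity>)\<close>. At a first positive zero of \<open>H\<close> it then gives
  \<open>H' = q (q + p) > 0\<close>, which is impossible, and \<open>H\<close> starts positive because \<open>H(0) = 0 < H'(0)\<close>.
\<close>

lemma pos_on_halfline_by_first_zero:
  fixes f f' :: "real \<Rightarrow> real"
  assumes der: "\<And>x. (f has_real_derivative f' x) (at x)"
    and near_0: "eventually (\<lambda>y. f y > 0) (at_right 0)"
    and first_zero: "\<And>z. z > 0 \<Longrightarrow> (\<And>y. 0 < y \<Longrightarrow> y < z \<Longrightarrow> f y > 0) \<Longrightarrow> f z = 0 \<Longrightarrow> f' z > 0"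
    and "x > 0"
  shows "f x > 0"
proof (rule ccontr)
  assume x_nonpos: "\<not> f x > 0"
  have cont: "continuous_on UNIV f"
    using DERIV_isCont[OF der] by (simp add: continuous_at_imp_continuous_on)
  obtain b where "b > 0" and b: "\<And>y. 0 < y \<Longrightarrow> y < b \<Longrightarrow> f y > 0"
    using near_0 by (auto simp: eventually_at_right_field)
  define a where "a = min (b/2) (x/2)"
  have a: "0 < a" "a < x" "\<And>y. 0 < y \<Longrightarrow> y \<le> a \<Longrightarrow> f y > 0"
    using \<open>b > 0\<close> \<open>x > 0\<close> b by (auto simp: a_def)
  define S where "S = {a..x} \<inter> {y. f y \<le> 0}"
  have "compact S"
    unfolding S_def using cont by (intro compact_Int_closed closed_Collect_le) auto
  moreover have "x \<in> S" using x_nonpos a(2) by (auto simp: S_def)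
  ultimately obtain z where "z \<in> S" and z_min: "\<And>y. y \<in> S \<Longrightarrow> z \<le> y"
    using compact_attains_inf[of S] by auto
  have "f z \<le> 0" "a \<le> z" "z \<le> x" using \<open>z \<in> S\<close> by (auto simp: S_def)
  have "a < z" using \<open>a \<le> z\<close> \<open>f z \<le> 0\<close> a(1) a(3)[of a] by (cases "z = a") auto
  have below_z: "f y > 0" if "0 < y" "y < z" for y
    using a(3)[of y] z_min[of y] that \<open>z \<le> x\<close> by (force simp: S_def)
  have "f z = 0"
  proof (rule ccontr)
    assume "f z \<noteq> 0"
    with \<open>f z \<le> 0\<close> have "f z < 0" by simp
    moreover have "continuous_on {a..z} f" using continuous_on_subset[OF cont] by blast
    ultimately obtain w where "a \<le> w" "w \<le> z" "f w = 0"
      using IVT2'[of f z 0 a] a(1) a(3)[of a] \<open>a < z\<close> by force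
    moreover have "w \<noteq> z" using \<open>f z < 0\<close> \<open>f w = 0\<close> by auto
    ultimately show False using below_z[of w] a(1) by simp
  qed
  then have "f' z > 0" using first_zero below_z \<open>a < z\<close> a(1) by simp
  then obtain e where "e > 0" and e: "\<And>h. h > 0 \<Longrightarrow> h < e \<Longrightarrow> f (z - h) < f z"
    using DERIV_pos_inc_left[OF der] by blast
  define h where "h = min (e/2) (z/2)"
  have "h > 0" "h < e" "0 < z - h" "z - h < z"
    using \<open>e > 0\<close> \<open>a < z\<close> a(1) by (auto simp: h_def)
  then show False using e[of h] below_z[of "z - h"] \<open>f z = 0\<close> by simp
qed

definition kummer_coeff :: "real \<Rightarrow> real \<Rightarrow> nat \<Rightarrow> real" where
  "kummer_coeff \<nu> c n = pochhammer (-\<nu>) n / fact n * rGamma (c + real n)"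

definition kummer :: "real \<Rightarrow> real \<Rightarrow> real \<Rightarrow> real" where
  "kummer \<nu> c t = (\<Sum>n. kummer_coeff \<nu> c n * t ^ n)"

lemma kummer_coeff_Suc:
  "(real n + 1) * (c + real n) * kummer_coeff \<nu> c (Suc n) = (real n - \<nu>) * kummer_coeff \<nu> c n"
proof -
  have rGamma: "(c + real n) * rGamma (c + real (Suc n)) = rGamma (c + real n)"
    using rGamma_plus1[of "c + real n"] by (simp add: add_ac)
  have "(real n + 1) * (c + real n) * kummer_coeff \<nu> c (Suc n)
      = (real n + 1) / fact (Suc n) * pochhammer (-\<nu>) (Suc n) * ((c + real n) * rGamma (c + real (Suc n)))"
    by (simp add: kummer_coeff_def)
  also have "(real n + 1) / fact (Suc n) = 1 / fact n"
    by (simp add: divide_simps)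
  finally show ?thesis
    unfolding rGamma by (simp add: kummer_coeff_def pochhammer_rec')
qed

lemma kummer_coeff_Suc_conv_shift:
  "(real n + 1) * kummer_coeff \<nu> c (Suc n) = - \<nu> * kummer_coeff (\<nu> - 1) (c + 1) n"
proof -
  have "pochhammer (-\<nu>) (Suc n) = - \<nu> * pochhammer (- (\<nu> - 1)) n"
    by (simp add: pochhammer_rec)
  then show ?thesis by (simp add: kummer_coeff_def add_ac)
qed

lemma diffs_kummer_coeff: "diffs (kummer_coeff \<nu> c) = (\<lambda>n. - \<nu> * kummer_coeff (\<nu> - 1) (c + 1) n)"
  using kummer_coeff_Suc_conv_shift by (auto simp: diffs_def add.commute)

lemma summable_kummer: "summable (\<lambda>n. kummer_coeff \<nu> c n * t ^ n)"
proof (rule summable_ratio_test[where c="1/2" and N="nat \<lceil>\<bar>\<nu>\<bar> + \<bar>c\<bar> + 4 * \<bar>t\<bar> + 1\<rceil>"])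
  fix n assume "n \<ge> nat \<lceil>\<bar>\<nu>\<bar> + \<bar>c\<bar> + 4 * \<bar>t\<bar> + 1\<rceil>"
  then have n: "\<bar>\<nu>\<bar> + \<bar>c\<bar> + 4 * \<bar>t\<bar> + 1 \<le> real n"
    using real_nat_ceiling_ge order_trans of_nat_mono by blast
  then have cn: "c + real n > 0" by linarith
  have "\<bar>real n - \<nu>\<bar> * \<bar>t\<bar> \<le> (2 * (real n + 1)) * ((c + real n) / 4)"
    using n by (intro mult_mono) auto
  also have "\<dots> = (real n + 1) * (c + real n) / 2"
    by simp
  finally have ratio: "\<bar>real n - \<nu>\<bar> * \<bar>t\<bar> / ((real n + 1) * (c + real n)) \<le> 1/2"
    using cn by (simp add: divide_simps)
  have "(real n + 1) * (c + real n) \<noteq> 0" using cn by simp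
  then have "kummer_coeff \<nu> c (Suc n) = (real n - \<nu>) / ((real n + 1) * (c + real n)) * kummer_coeff \<nu> c n"
    using kummer_coeff_Suc[of n c \<nu>] by (simp add: eq_divide_eq ac_simps)
  then have "norm (kummer_coeff \<nu> c (Suc n) * t ^ Suc n)
      = \<bar>real n - \<nu>\<bar> * \<bar>t\<bar> / ((real n + 1) * (c + real n)) * norm (kummer_coeff \<nu> c n * t ^ n)"
    using cn by (simp add: abs_mult power_abs)
  also have "\<dots> \<le> 1/2 * norm (kummer_coeff \<nu> c n * t ^ n)"
    using ratio by (rule mult_right_mono) simp
  finally show "norm (kummer_coeff \<nu> c (Suc n) * t ^ Suc n) \<le> 1/2 * norm (kummer_coeff \<nu> c n * t ^ n)" .
qed simp

lemma kummer_sums: "(\<lambda>n. kummer_coeff \<nu> c n * t ^ n) sums kummer \<nu> c t"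
  unfolding kummer_def by (rule summable_sums summable_kummer)+

lemma kummer_0: "kummer \<nu> c 0 = rGamma c"
  unfolding kummer_def powser_zero by (simp add: kummer_coeff_def)

lemma diffs_kummer_sums:
  "(\<lambda>n. diffs (kummer_coeff \<nu> c) n * t ^ n) sums (- \<nu> * kummer (\<nu> - 1) (c + 1) t)"
  unfolding diffs_kummer_coeff mult.assoc by (rule sums_mult kummer_sums)+

lemma kummer_has_field_derivative:
  "(kummer \<nu> c has_field_derivative - \<nu> * kummer (\<nu> - 1) (c + 1) t) (at t)"
  using termdiffs_strong_converges_everywhere[OF summable_kummer, of \<nu> c t]
    sums_unique[OF diffs_kummer_sums[of \<nu> c t]]
  by (simp add: kummer_def[abs_def])

lemma kummer_reflected_has_derivative:
  "((\<lambda>y. kummer \<nu> c (-y)) has_real_derivative \<nu> * kummer (\<nu> - 1) (c + 1) (-y)) (at y)"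
  using DERIV_chain2[OF kummer_has_field_derivative DERIV_minus[OF DERIV_ident]] by simp

lemma euler_operator_powser_sums:
  fixes a :: "nat \<Rightarrow> real"
  assumes "(\<lambda>n. diffs a n * t ^ n) sums s"
  shows "(\<lambda>n. real n * a n * t ^ n) sums (t * s)"
proof -
  have "(\<lambda>n. t * (diffs a n * t ^ n)) sums (t * s)"
    using assms by (rule sums_mult)
  then have "(\<lambda>n. real (Suc n) * a (Suc n) * t ^ Suc n) sums (t * s)"
    by (simp add: diffs_def mult_ac)
  then show ?thesis by (subst (asm) sums_Suc_iff) simp
qed

lemma kummer_euler_operator_sums:
  "(\<lambda>n. real n * kummer_coeff \<nu> c n * t ^ n) sums (- \<nu> * t * kummer (\<nu> - 1) (c + 1) t)"
  using euler_operator_powser_sums[OF diffs_kummer_sums] by (simp add: mult_ac)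

text \<open>Kummer's equation \<open>t K'' + (c - t) K' + \<nu> K = 0\<close> for \<open>K = kummer \<nu> c\<close>.\<close>

lemma kummer_ode:
  "t * (\<nu> * (\<nu> - 1) * kummer (\<nu> - 2) (c + 2) t) - (c - t) * (\<nu> * kummer (\<nu> - 1) (c + 1) t)
     + \<nu> * kummer \<nu> c t = 0"
proof -
  define A A1 where "A = kummer_coeff \<nu> c" and "A1 = kummer_coeff (\<nu> - 1) (c + 1)"
  have coeff: "- \<nu> * (real n + c) * A1 n = (real n - \<nu>) * A n" for n
  proof -
    have "- \<nu> * (real n + c) * A1 n = (c + real n) * ((real n + 1) * A (Suc n))"
      unfolding A_def A1_def kummer_coeff_Suc_conv_shift by (simp add: algebra_simps)
    also have "\<dots> = (real n - \<nu>) * A n"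
      using kummer_coeff_Suc[of n c \<nu>] by (simp add: A_def mult_ac)
    finally show ?thesis .
  qed
  have series: "(\<lambda>n. - \<nu> * (real n * A1 n * t ^ n) - c * \<nu> * (A1 n * t ^ n)
            - real n * A n * t ^ n + \<nu> * (A n * t ^ n))
        sums (- \<nu> * (- (\<nu> - 1) * t * kummer (\<nu> - 2) (c + 2) t) - c * \<nu> * kummer (\<nu> - 1) (c + 1) t
              - (- \<nu> * t * kummer (\<nu> - 1) (c + 1) t) + \<nu> * kummer \<nu> c t)"
    using kummer_euler_operator_sums[of "\<nu> - 1" "c + 1" t] unfolding A_def A1_def
    by (intro sums_add sums_diff sums_mult kummer_sums kummer_euler_operator_sums)
       (simp_all add: add.assoc)
  have "(\<lambda>n. - \<nu> * (real n * A1 n * t ^ n) - c * \<nu> * (A1 n * t ^ n)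
            - real n * A n * t ^ n + \<nu> * (A n * t ^ n)) = (\<lambda>n. 0)"
  proof
    fix n
    have "- \<nu> * (real n * A1 n * t ^ n) - c * \<nu> * (A1 n * t ^ n)
            - real n * A n * t ^ n + \<nu> * (A n * t ^ n)
          = (- \<nu> * (real n + c) * A1 n - (real n - \<nu>) * A n) * t ^ n"
      by (simp add: algebra_simps)
    also have "\<dots> = 0"
      unfolding coeff by simp
    finally show "- \<nu> * (real n * A1 n * t ^ n) - c * \<nu> * (A1 n * t ^ n)
            - real n * A n * t ^ n + \<nu> * (A n * t ^ n) = 0" .
  qed
  from series[unfolded this]
  have "- \<nu> * (- (\<nu> - 1) * t * kummer (\<nu> - 2) (c + 2) t) - c * \<nu> * kummer (\<nu> - 1) (c + 1) t
          - (- \<nu> * t * kummer (\<nu> - 1) (c + 1) t) + \<nu> * kummer \<nu> c t = 0"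
    by (simp add: sums_iff)
  then show ?thesis by (simp add: algebra_simps)
qed

lemma kummer_contiguous:
  "kummer (\<nu> + 1) (c - 1) t = (c - 1 - t) * kummer \<nu> c t - \<nu> * t * kummer (\<nu> - 1) (c + 1) t"
proof -
  define A where "A = kummer_coeff \<nu> c"
  define A_prev where "A_prev n = (case n of 0 \<Rightarrow> 0 | Suc m \<Rightarrow> A m)" for n
  have coeff: "kummer_coeff (\<nu> + 1) (c - 1) n = (c - 1 + real n) * A n - A_prev n" for n
  proof (cases n)
    case 0
    then show ?thesis using rGamma_plus1[of "c - 1"] by (simp add: A_def A_prev_def kummer_coeff_def)
  next
    case (Suc m)
    have "kummer_coeff (\<nu> + 1) (c - 1) (Suc m) = - (\<nu> + 1) / (real m + 1) * A m"
      unfolding A_def kummer_coeff_def by (simp add: pochhammer_rec fact_Suc field_simps)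
    also have "\<dots> = (c + real m) * A (Suc m) - A m"
      using kummer_coeff_Suc[of m c \<nu>] unfolding A_def by (simp add: field_simps)
    finally show ?thesis using Suc by (simp add: A_prev_def)
  qed
  have "(\<lambda>n. A_prev (Suc n) * t ^ Suc n) sums (t * kummer \<nu> c t)"
    using sums_mult[OF kummer_sums, of t \<nu> c t] by (simp add: A_def A_prev_def mult_ac)
  then have "(\<lambda>n. A_prev n * t ^ n) sums (t * kummer \<nu> c t)"
    using sums_Suc_iff[of "\<lambda>n. A_prev n * t ^ n"] by (simp add: A_prev_def)
  then have "(\<lambda>n. (c - 1) * (A n * t ^ n) + real n * A n * t ^ n - A_prev n * t ^ n)
      sums ((c - 1) * kummer \<nu> c t + - \<nu> * t * kummer (\<nu> - 1) (c + 1) t - t * kummer \<nu> c t)"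
    unfolding A_def by (intro sums_add sums_diff sums_mult kummer_sums kummer_euler_operator_sums)
  then have "(\<lambda>n. kummer_coeff (\<nu> + 1) (c - 1) n * t ^ n)
      sums ((c - 1) * kummer \<nu> c t + - \<nu> * t * kummer (\<nu> - 1) (c + 1) t - t * kummer \<nu> c t)"
    unfolding coeff by (simp add: algebra_simps)
  from sums_unique2[OF kummer_sums this] show ?thesis by (simp add: algebra_simps)
qed

lemma eventually_pos_at_right_of_pos:
  fixes f :: "real \<Rightarrow> real"
  assumes "isCont f 0" "f 0 > 0"
  shows "eventually (\<lambda>y. f y > 0) (at_right 0)"
proof -
  have "(f \<longlongrightarrow> f 0) (at_right 0)"
    using continuous_at_imp_continuous_within[OF assms(1)] by (simp add: continuous_within)
  then show ?thesis using assms(2) by (rule order_tendstoD(1))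
qed

lemma eventually_pos_at_right_of_deriv_pos:
  fixes f :: "real \<Rightarrow> real"
  assumes "(f has_real_derivative l) (at 0)" "f 0 = 0" "l > 0"
  shows "eventually (\<lambda>y. f y > 0) (at_right 0)"
proof -
  obtain d where "d > 0" and d: "\<And>h. h > 0 \<Longrightarrow> h < d \<Longrightarrow> f 0 < f (0 + h)"
    using DERIV_pos_inc_right[OF assms(1,3)] by blast
  have "f y > 0" if "0 < y" "y < d" for y
    using d[OF that] \<open>f 0 = 0\<close> by simp
  then show ?thesis
    unfolding eventually_at_right_field using \<open>d > 0\<close> by blast
qed

lemma ode_solution_pos:
  fixes p q r :: "real \<Rightarrow> real" and c \<nu> x :: real
  assumes "c > 0" "\<nu> > 0"
    and p': "\<And>x. (p has_real_derivative q x) (at x)"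
    and q': "\<And>x. (q has_real_derivative r x) (at x)"
    and ode: "\<And>x. x \<ge> 0 \<Longrightarrow> x * r x + (c + x) * q x = \<nu> * p x"
    and "p 0 > 0" and "x > 0"
  shows "p x > 0" and "q x > 0"
proof -
  have "c * q 0 = \<nu> * p 0" using ode[of 0] by simp
  then have "q 0 = \<nu> * p 0 / c" using \<open>c > 0\<close> by (simp add: field_simps)
  then have "q 0 > 0" using \<open>c > 0\<close> \<open>\<nu> > 0\<close> \<open>p 0 > 0\<close> by simp
  have p_pos: "p y > 0" if "y > 0" and q_pos: "\<And>z. 0 < z \<Longrightarrow> z < y \<Longrightarrow> q z > 0" for y
  proof -
    obtain z where "0 < z" "z < y" "p y - p 0 = (y - 0) * q z"
      using MVT2[of 0 y p q] \<open>y > 0\<close> p' by blast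
    moreover have "(y - 0) * q z > 0" using q_pos[of z] \<open>0 < z\<close> \<open>z < y\<close> by simp
    ultimately show ?thesis using \<open>p 0 > 0\<close> by linarith
  qed
  have q_pos: "q y > 0" if "y > 0" for y
  proof (rule pos_on_halfline_by_first_zero[OF q' _ _ that])
    show "eventually (\<lambda>y. q y > 0) (at_right 0)"
      using DERIV_isCont[OF q'] \<open>q 0 > 0\<close> by (rule eventually_pos_at_right_of_pos)
    fix z assume "z > 0" "\<And>y. 0 < y \<Longrightarrow> y < z \<Longrightarrow> q y > 0" "q z = 0"
    then have "z * r z = \<nu> * p z" using ode[of z] by simp
    moreover have "p z > 0" using \<open>z > 0\<close> \<open>\<And>y. 0 < y \<Longrightarrow> y < z \<Longrightarrow> q y > 0\<close> by (rule p_pos)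
    ultimately have "z * r z > 0" using \<open>\<nu> > 0\<close> by simp
    then show "r z > 0" using \<open>z > 0\<close> by (simp add: zero_less_mult_iff)
  qed
  show "q x > 0" using q_pos \<open>x > 0\<close> .
  show "p x > 0" by (rule p_pos[OF \<open>x > 0\<close>]) (rule q_pos)
qed

lemma ode_solution_quadratic_pos:
  fixes p q r :: "real \<Rightarrow> real" and c \<nu> x :: real
  assumes "c > 0" "\<nu> > 0"
    and p': "\<And>x. (p has_real_derivative q x) (at x)"
    and q': "\<And>x. (q has_real_derivative r x) (at x)"
    and ode: "\<And>x. x \<ge> 0 \<Longrightarrow> x * r x + (c + x) * q x = \<nu> * p x"
    and "p 0 > 0"
    and r0: "(c + 1) * r 0 = (\<nu> - 1) * q 0" \<comment> \<open>the ODE differentiated at 0; it makes \<open>H'(0) > 0\<close>\<close>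
    and "x > 0"
  shows "x * (q x)^2 + (c + x) * p x * q x - \<nu> * (p x)^2 > 0"
proof -
  have pos: "p y > 0" "q y > 0" if "y > 0" for y
    using ode_solution_pos[OF assms(1-6) that] by auto
  define H where "H y = y * (q y)^2 + (c + y) * p y * q y - \<nu> * (p y)^2" for y
  define H' where "H' y = (q y)^2 + 2 * y * q y * r y + p y * q y
                          + (c + y) * (q y * q y + p y * r y) - 2 * \<nu> * p y * q y" for y
  have H': "(H has_real_derivative H' y) (at y)" for y
    unfolding H_def[abs_def] H'_def
    by (auto intro!: derivative_eq_intros p' q' simp: power2_eq_square algebra_simps)
  have q0: "c * q 0 = \<nu> * p 0" using ode[of 0] by simp
  then have "q 0 = \<nu> * p 0 / c" using \<open>c > 0\<close> by (simp add: field_simps)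
  then have "q 0 > 0" using \<open>c > 0\<close> \<open>\<nu> > 0\<close> \<open>p 0 > 0\<close> by simp
  from q0 have "H 0 = 0" by (simp add: H_def power2_eq_square algebra_simps)
  have "\<nu> * (c + 1) * H' 0 = (q 0)^2 * (\<nu> + c)"
    using q0 r0 unfolding H'_def power2_eq_square by algebra
  then have "H' 0 = (q 0)^2 * (\<nu> + c) / (\<nu> * (c + 1))"
    using \<open>c > 0\<close> \<open>\<nu> > 0\<close> by (simp add: eq_divide_eq ac_simps)
  then have "H' 0 > 0" using \<open>q 0 > 0\<close> \<open>c > 0\<close> \<open>\<nu> > 0\<close> by simp
  have "H x > 0"
  proof (rule pos_on_halfline_by_first_zero[OF H' _ _ \<open>x > 0\<close>])
    show "eventually (\<lambda>y. H y > 0) (at_right 0)"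
      using H' \<open>H 0 = 0\<close> \<open>H' 0 > 0\<close> by (rule eventually_pos_at_right_of_deriv_pos)
    fix z assume "z > 0" "\<And>y. 0 < y \<Longrightarrow> y < z \<Longrightarrow> H y > 0" "H z = 0"
    have "z * H' z = - (c + z) * H z + z * (q z * (q z + p z))"
    proof -
      have "z * H' z - (- (c + z) * H z + z * (q z * (q z + p z)))
          = (z * r z + (c + z) * q z - \<nu> * p z) * (2 * z * q z + (c + z) * p z)"
        by (simp add: H_def H'_def power2_eq_square algebra_simps)
      then show ?thesis using ode[of z] \<open>z > 0\<close> by simp
    qed
    then have "H' z = q z * (q z + p z)" using \<open>z > 0\<close> \<open>H z = 0\<close> by simp
    then show "H' z > 0" using pos[OF \<open>z > 0\<close>] by simp
  qed
  then show ?thesis by (simp add: H_def)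
qed

lemma kummer_reflected_quadratic_pos:
  fixes \<nu> c x :: real
  defines "p \<equiv> \<lambda>y. kummer \<nu> c (-y)" and "q \<equiv> \<lambda>y. \<nu> * kummer (\<nu> - 1) (c + 1) (-y)"
  assumes "c > 0" "\<nu> > 0" "x > 0"
  shows "p x > 0" "q x > 0" "x * (q x)^2 + (c + x) * p x * q x - \<nu> * (p x)^2 > 0"
proof -
  define r where "r y = \<nu> * (\<nu> - 1) * kummer (\<nu> - 2) (c + 2) (-y)" for y
  have p': "(p has_real_derivative q y) (at y)" for y
    unfolding p_def q_def by (rule kummer_reflected_has_derivative)
  have q': "(q has_real_derivative r y) (at y)" for y
    using DERIV_cmult[OF kummer_reflected_has_derivative[of "\<nu> - 1" "c + 1" y], of \<nu>]
    unfolding q_def r_def by (simp add: add.assoc mult.assoc)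
  have ode: "y * r y + (c + y) * q y = \<nu> * p y" for y
    using kummer_ode[of "-y" \<nu> c] unfolding p_def q_def r_def by (simp add: algebra_simps)
  have "p 0 > 0" using \<open>c > 0\<close> by (simp add: p_def kummer_0 rGamma_inverse_Gamma)
  have "(c + 1) * r 0 = (\<nu> - 1) * q 0"
    using rGamma_plus1[of "c + 1"] by (simp add: q_def r_def kummer_0 add.assoc algebra_simps)
  then show "x * (q x)^2 + (c + x) * p x * q x - \<nu> * (p x)^2 > 0"
    by (rule ode_solution_quadratic_pos[OF \<open>c > 0\<close> \<open>\<nu> > 0\<close> p' q' ode \<open>p 0 > 0\<close> _ \<open>x > 0\<close>])
  show "p x > 0" "q x > 0"
    by (rule ode_solution_pos[OF \<open>c > 0\<close> \<open>\<nu> > 0\<close> p' q' ode \<open>p 0 > 0\<close> \<open>x > 0\<close>])+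
qed

lemma laguerre_fun_eq_kummer:
  "laguerre_fun \<nu> \<alpha> x = Gamma (\<nu> + \<alpha> + 1) / Gamma (\<nu> + 1) * kummer \<nu> (\<alpha> + 1) x"
proof -
  have "(\<lambda>k. pochhammer (-\<nu>) k * x ^ k / fact k * rGamma (\<alpha> + 1 + real k))
      = (\<lambda>k. kummer_coeff \<nu> (\<alpha> + 1) k * x ^ k)"
    by (simp add: kummer_coeff_def field_simps)
  then show ?thesis by (simp add: laguerre_fun_def kummer_def)
qed

lemma laguerre_fun_ratio_eq_kummer:
  assumes "\<nu> > -1" "\<nu> + \<alpha> + 1 > 0"
  shows "laguerre_fun (\<nu> + 1) (\<alpha> - 1) t / laguerre_fun \<nu> \<alpha> t
           = kummer (\<nu> + 1) \<alpha> t / ((\<nu> + 1) * kummer \<nu> (\<alpha> + 1) t)"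
proof -
  define G where "G = Gamma (\<nu> + \<alpha> + 1)"
  have "G > 0" "Gamma (\<nu> + 1) > 0" using assms by (simp_all add: G_def)
  have "Gamma (\<nu> + 1 + 1) = (\<nu> + 1) * Gamma (\<nu> + 1)"
    using \<open>\<nu> > -1\<close> by (intro Gamma_plus1) (auto elim!: nonpos_Ints_cases)
  then have "laguerre_fun (\<nu> + 1) (\<alpha> - 1) t = G / ((\<nu> + 1) * Gamma (\<nu> + 1)) * kummer (\<nu> + 1) \<alpha> t"
    by (simp add: laguerre_fun_eq_kummer G_def algebra_simps)
  moreover have "laguerre_fun \<nu> \<alpha> t = G / Gamma (\<nu> + 1) * kummer \<nu> (\<alpha> + 1) t"
    by (simp add: laguerre_fun_eq_kummer G_def)
  ultimately show ?thesis using \<open>G > 0\<close> \<open>Gamma (\<nu> + 1) > 0\<close> by simp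
qed

lemma sqrt_bound_of_quadratic_pos:
  fixes a \<nu> x p q :: real
  assumes "a > -1" "\<nu> > -1" "x > 0" "p > 0" "q > 0"
    and quadratic_pos: "x * q^2 + (a + 1 + x) * p * q - \<nu> * p^2 > 0"
  shows "(a + x - 1 + sqrt ((a + x + 1)^2 + 4 * \<nu> * x)) / (2 * (\<nu> + 1))
           < ((a + x) * p + x * q) / ((\<nu> + 1) * p)"
proof -
  define b where "b = a + x + 1 + 2 * x * q / p"
  have "2 * x * q / p > 0" using assms by simp
  then have "b > 0" unfolding b_def using \<open>a > -1\<close> \<open>x > 0\<close> by linarith
  have "b^2 - ((a + x + 1)^2 + 4 * \<nu> * x) = 4 * x * (x * q^2 + (a + 1 + x) * p * q - \<nu> * p^2) / p^2"
    using \<open>p > 0\<close> by (simp add: b_def field_simps power2_eq_square)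
  also have "\<dots> > 0" using quadratic_pos \<open>x > 0\<close> \<open>p > 0\<close> by simp
  finally have "sqrt ((a + x + 1)^2 + 4 * \<nu> * x) < sqrt (b^2)" by (intro real_sqrt_less_mono) simp
  then have "(a + x - 1 + sqrt ((a + x + 1)^2 + 4 * \<nu> * x)) / (2 * (\<nu> + 1))
      < (a + x - 1 + b) / (2 * (\<nu> + 1))"
    using \<open>b > 0\<close> \<open>\<nu> > -1\<close> by (simp add: divide_strict_right_mono)
  also have "\<dots> = ((a + x) * p + x * q) / ((\<nu> + 1) * p)"
    using \<open>p > 0\<close> \<open>\<nu> > -1\<close> by (auto simp: b_def divide_simps) (simp_all add: algebra_simps)
  finally show ?thesis .
qed

theorem theorem19:
  fixes \<alpha> \<nu> x :: real
  assumes "\<alpha> > -1" and "\<nu> > 0" and "x > 0"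
  shows "laguerre_fun (\<nu> + 1) (\<alpha> - 1) (-x) / laguerre_fun \<nu> \<alpha> (-x)
           > (\<alpha> + x - 1 + sqrt ((\<alpha> + x + 1)^2 + 4 * \<nu> * x)) / (2 * (\<nu> + 1))"
proof -
  define p q where "p = kummer \<nu> (\<alpha> + 1) (-x)" and "q = \<nu> * kummer (\<nu> - 1) (\<alpha> + 2) (-x)"
  have pos: "p > 0" "q > 0" "x * q^2 + (\<alpha> + 1 + x) * p * q - \<nu> * p^2 > 0"
    using kummer_reflected_quadratic_pos[of "\<alpha> + 1" \<nu> x] assms
    by (simp_all add: p_def q_def add.assoc)
  have "kummer (\<nu> + 1) \<alpha> (-x) = (\<alpha> + x) * p + x * q"
    using kummer_contiguous[of \<nu> "\<alpha> + 1" "-x"] by (simp add: p_def q_def add.assoc algebra_simps)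
  then have "laguerre_fun (\<nu> + 1) (\<alpha> - 1) (-x) / laguerre_fun \<nu> \<alpha> (-x)
      = ((\<alpha> + x) * p + x * q) / ((\<nu> + 1) * p)"
    using laguerre_fun_ratio_eq_kummer[of \<nu> \<alpha> "-x"] assms by (simp add: p_def)
  moreover have "(\<alpha> + x - 1 + sqrt ((\<alpha> + x + 1)^2 + 4 * \<nu> * x)) / (2 * (\<nu> + 1))
      < ((\<alpha> + x) * p + x * q) / ((\<nu> + 1) * p)"
    using assms pos by (intro sqrt_bound_of_quadratic_pos) auto
  ultimately show ?thesis by simp
qed

end
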